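(* Let $X$ be an $n$-skeletal simplicial set. Then $\text{St}(X)$ (i.e. its underlying simplicial set) is $(n+1)$-coskeletal.
   Context: A simplicial $T$-complex is a simplicial set with marked ("thin") simplices such that degenerate simplices are thin, every horn $\Lambda^n_k\to X$ has a unique filler with thin top simplex, and if all nondegenerate faces of a horn are thin then its composition (the $k$-th face of that filler) is thin; morphisms are thin-preserving simplicial maps. $\text{St}:\text{sSet}\to\text{sTCom}$ is the left adjoint of the forgetful functor $\text{U}_{\text{St}}$ from simplicial $T$-complexes to simplicial sets. *)

theory Defs
  imports Main
begin

(* A simplicial set, presented by graded carriers with face and degeneracy maps.
   sx X m        : the set of m-simplices
   fc X n i      : the face map d_i : X_(n+1) -> X_n   (i <= n+1)
   dg X n i      : the degeneracy s_i : X_n -> X_(n+1) (i <= n)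
   Values of fc/dg outside the carriers are irrelevant. *)
record 'a sset =
  sx :: "nat \<Rightarrow> 'a set"
  fc :: "nat \<Rightarrow> nat \<Rightarrow> 'a \<Rightarrow> 'a"
  dg :: "nat \<Rightarrow> nat \<Rightarrow> 'a \<Rightarrow> 'a"

definition is_sset :: "'a sset \<Rightarrow> bool" where
  "is_sset X \<longleftrightarrow>
     (\<forall>n i x. i \<le> Suc n \<and> x \<in> sx X (Suc n) \<longrightarrow> fc X n i x \<in> sx X n) \<and>
     (\<forall>n i x. i \<le> n \<and> x \<in> sx X n \<longrightarrow> dg X n i x \<in> sx X (Suc n)) \<and>
     \<comment> \<open>d_i d_j = d_(j-1) d_i for i < j\<close>
     (\<forall>n i j x. i < j \<and> j \<le> Suc (Suc n) \<and> x \<in> sx X (Suc (Suc n)) \<longrightarrow>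
        fc X n i (fc X (Suc n) j x) = fc X n (j - 1) (fc X (Suc n) i x)) \<and>
     \<comment> \<open>s_i s_j = s_(j+1) s_i for i <= j\<close>
     (\<forall>n i j x. i \<le> j \<and> j \<le> n \<and> x \<in> sx X n \<longrightarrow>
        dg X (Suc n) i (dg X n j x) = dg X (Suc n) (Suc j) (dg X n i x)) \<and>
     \<comment> \<open>d_i s_j = s_(j-1) d_i for i < j\<close>
     (\<forall>n i j x. i < j \<and> j \<le> Suc n \<and> x \<in> sx X (Suc n) \<longrightarrow>
        fc X (Suc n) i (dg X (Suc n) j x) = dg X n (j - 1) (fc X n i x)) \<and>
     \<comment> \<open>d_j s_j = d_(j+1) s_j = id\<close>
     (\<forall>n j x. j \<le> n \<and> x \<in> sx X n \<longrightarrow>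
        fc X n j (dg X n j x) = x \<and> fc X n (Suc j) (dg X n j x) = x) \<and>
     \<comment> \<open>d_i s_j = s_j d_(i-1) for i > j+1\<close>
     (\<forall>n i j x. Suc j < i \<and> i \<le> Suc (Suc n) \<and> x \<in> sx X (Suc n) \<longrightarrow>
        fc X (Suc n) i (dg X (Suc n) j x) = dg X n j (fc X n (i - 1) x))"

definition is_smap :: "'a sset \<Rightarrow> 'b sset \<Rightarrow> (nat \<Rightarrow> 'a \<Rightarrow> 'b) \<Rightarrow> bool" where
  "is_smap X Y f \<longleftrightarrow>
     (\<forall>m. \<forall>x\<in>sx X m. f m x \<in> sx Y m) \<and>
     (\<forall>n i x. i \<le> Suc n \<and> x \<in> sx X (Suc n) \<longrightarrow> f n (fc X n i x) = fc Y n i (f (Suc n) x)) \<and>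
     (\<forall>n i x. i \<le> n \<and> x \<in> sx X n \<longrightarrow> f (Suc n) (dg X n i x) = dg Y n i (f n x))"

definition degenerate :: "'a sset \<Rightarrow> nat \<Rightarrow> 'a \<Rightarrow> bool" where
  "degenerate X m x \<longleftrightarrow> (\<exists>p i y. m = Suc p \<and> i \<le> p \<and> y \<in> sx X p \<and> x = dg X p i y)"

(* With
   I = {0..n+1} - {k} this is a horn \<Lambda>^(n+1)_k \<rightarrow> X, with I = {0..n+1}
   a map \<partial>\<Delta>^(n+1) \<rightarrow> X.  (For n = 0 there is no compatibility condition.) *)
definition face_family :: "'a sset \<Rightarrow> nat \<Rightarrow> nat set \<Rightarrow> (nat \<Rightarrow> 'a) \<Rightarrow> bool" where
  "face_family X n I y \<longleftrightarrow>
     (\<forall>i\<in>I. y i \<in> sx X n) \<and>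
     (0 < n \<longrightarrow> (\<forall>i\<in>I. \<forall>j\<in>I. i < j \<longrightarrow> fc X (n - 1) i (y j) = fc X (n - 1) (j - 1) (y i)))"

definition is_filler :: "'a sset \<Rightarrow> nat \<Rightarrow> nat set \<Rightarrow> (nat \<Rightarrow> 'a) \<Rightarrow> 'a \<Rightarrow> bool" where
  "is_filler X n I y x \<longleftrightarrow> x \<in> sx X (Suc n) \<and> (\<forall>i\<in>I. fc X n i x = y i)"

definition horn_idx :: "nat \<Rightarrow> nat \<Rightarrow> nat set" where
  "horn_idx n k = {0..Suc n} - {k}"

definition skeletal :: "'a sset \<Rightarrow> nat \<Rightarrow> bool" where
  "skeletal X n \<longleftrightarrow> (\<forall>m. n < m \<longrightarrow> (\<forall>x\<in>sx X m. degenerate X m x))"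

definition coskeletal :: "'a sset \<Rightarrow> nat \<Rightarrow> bool" where
  "coskeletal X n \<longleftrightarrow>
     (\<forall>m y. n < Suc m \<and> face_family X m {0..Suc m} y \<longrightarrow>
        (\<exists>!x. is_filler X m {0..Suc m} y x))"

definition tcomplex :: "'a sset \<Rightarrow> (nat \<Rightarrow> 'a set) \<Rightarrow> bool" where
  "tcomplex X T \<longleftrightarrow>
     is_sset X \<and>
     (\<forall>m. T m \<subseteq> sx X m) \<and>
     (\<forall>m x. x \<in> sx X m \<and> degenerate X m x \<longrightarrow> x \<in> T m) \<and>
     (\<forall>n k y. k \<le> Suc n \<and> face_family X n (horn_idx n k) y \<longrightarrow>
        (\<exists>!x. x \<in> T (Suc n) \<and> is_filler X n (horn_idx n k) y x)) \<and>
     (\<forall>n k y x. k \<le> Suc n \<and> face_family X n (horn_idx n k) y \<and>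
        x \<in> T (Suc n) \<and> is_filler X n (horn_idx n k) y x \<and>
        (\<forall>i\<in>horn_idx n k. \<not> degenerate X n (y i) \<longrightarrow> y i \<in> T n) \<longrightarrow>
        fc X n k x \<in> T n)"

definition is_tmap :: "'a sset \<Rightarrow> (nat \<Rightarrow> 'a set) \<Rightarrow> 'b sset \<Rightarrow> (nat \<Rightarrow> 'b set) \<Rightarrow>
    (nat \<Rightarrow> 'a \<Rightarrow> 'b) \<Rightarrow> bool" where
  "is_tmap X TX Y TY f \<longleftrightarrow> is_smap X Y f \<and> (\<forall>m. \<forall>x\<in>TX m. f m x \<in> TY m)"

(* (S, T) together with the unit \<eta> : X \<rightarrow> U(S,T) is St(X), i.e. \<eta> is universal:
   every simplicial map X \<rightarrow> U(Y) into a T-complex factors uniquely through \<eta>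
   by a T-complex morphism.  The universal property is quantified over all
   T-complexes whose simplices live in the same type 'c as those of S. *)
definition is_St :: "'a sset \<Rightarrow> 'c sset \<Rightarrow> (nat \<Rightarrow> 'c set) \<Rightarrow> (nat \<Rightarrow> 'a \<Rightarrow> 'c) \<Rightarrow> bool" where
  "is_St X S T \<eta> \<longleftrightarrow>
     tcomplex S T \<and> is_smap X S \<eta> \<and>
     (\<forall>(Y :: 'c sset) TY f. tcomplex Y TY \<and> is_smap X Y f \<longrightarrow>
        (\<exists>g. is_tmap S T Y TY g \<and> (\<forall>m. \<forall>x\<in>sx X m. g m (\<eta> m x) = f m x) \<and>
             (\<forall>g'. is_tmap S T Y TY g' \<and> (\<forall>m. \<forall>x\<in>sx X m. g' m (\<eta> m x) = f m x) \<longrightarrow>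
                   (\<forall>m. \<forall>z\<in>sx S m. g' m z = g m z))))"

end

(*
  Call a simplex of St(X) hereditarily thin if it and all its iterated faces of dimension > n
  are thin. These simplices form a sub-T-complex: degenerate simplices are thin, and the
  missing face of the thin filler of a hereditarily thin horn is thin by the composition
  axiom, while its own faces are faces of the other faces of the horn. As X is n-skeletal,
  the unit X -> St(X) lands in this sub-T-complex, so by the universal property it is all of
  St(X): every simplex of dimension > n is thin. Since thin simplices are determined by any
  horn of their faces, a boundary of dimension m + 1 > n + 1 then has exactly one filler:
  the thin filler of its 0-horn.
*)

theory Submission
  imports Defs
begin

section \<open>Simplicial sets, simplicial maps and T-complexes\<close>

lemma sset_face_in:
  assumes "is_sset X" "i \<le> Suc n" "x \<in> sx X (Suc n)"
  shows "fc X n i x \<in> sx X n"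
  using assms unfolding is_sset_def by simp

lemma sset_degen_in:
  assumes "is_sset X" "i \<le> n" "x \<in> sx X n"
  shows "dg X n i x \<in> sx X (Suc n)"
  using assms unfolding is_sset_def by simp

lemma sset_face_face:
  assumes "is_sset X" "i < j" "j \<le> Suc (Suc n)" "x \<in> sx X (Suc (Suc n))"
  shows "fc X n i (fc X (Suc n) j x) = fc X n (j - 1) (fc X (Suc n) i x)"
  using assms unfolding is_sset_def by simp

lemma sset_degen_degen:
  assumes "is_sset X" "i \<le> j" "j \<le> n" "x \<in> sx X n"
  shows "dg X (Suc n) i (dg X n j x) = dg X (Suc n) (Suc j) (dg X n i x)"
  using assms unfolding is_sset_def by simp

lemma sset_face_degen_less:
  assumes "is_sset X" "i < j" "j \<le> Suc n" "x \<in> sx X (Suc n)"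
  shows "fc X (Suc n) i (dg X (Suc n) j x) = dg X n (j - 1) (fc X n i x)"
  using assms unfolding is_sset_def by simp

lemma sset_face_degen_eq:
  assumes "is_sset X" "j \<le> n" "x \<in> sx X n"
  shows "fc X n j (dg X n j x) = x" and "fc X n (Suc j) (dg X n j x) = x"
  using assms unfolding is_sset_def by simp_all

lemma sset_face_degen_greater:
  assumes "is_sset X" "Suc j < i" "i \<le> Suc (Suc n)" "x \<in> sx X (Suc n)"
  shows "fc X (Suc n) i (dg X (Suc n) j x) = dg X n j (fc X n (i - 1) x)"
  using assms unfolding is_sset_def by simp

lemma smap_in:
  assumes "is_smap X Y f" "x \<in> sx X m"
  shows "f m x \<in> sx Y m"
  using assms unfolding is_smap_def by simp

lemma smap_face:
  assumes "is_smap X Y f" "i \<le> Suc n" "x \<in> sx X (Suc n)"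
  shows "f n (fc X n i x) = fc Y n i (f (Suc n) x)"
  using assms unfolding is_smap_def by simp

lemma smap_degen:
  assumes "is_smap X Y f" "i \<le> n" "x \<in> sx X n"
  shows "f (Suc n) (dg X n i x) = dg Y n i (f n x)"
  using assms unfolding is_smap_def by simp

lemma smap_degenerate:
  assumes f: "is_smap X Y f" and x: "degenerate X m x"
  shows "degenerate Y m (f m x)"
proof -
  obtain p i z where "m = Suc p" "i \<le> p" "z \<in> sx X p" "x = dg X p i z"
    using x unfolding degenerate_def by blast
  moreover from this have "f m x = dg Y p i (f p z)"
    using smap_degen[OF f] by simp
  ultimately show ?thesis
    unfolding degenerate_def using smap_in[OF f] by blast
qed

lemma tcomplex_sset: "tcomplex S T \<Longrightarrow> is_sset S"
  unfolding tcomplex_def by simp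

lemma tcomplex_thin_subset: "tcomplex S T \<Longrightarrow> T m \<subseteq> sx S m"
  unfolding tcomplex_def by simp

lemma tcomplex_degenerate_thin:
  assumes "tcomplex S T" "x \<in> sx S m" "degenerate S m x"
  shows "x \<in> T m"
  using assms unfolding tcomplex_def by simp

lemma tcomplex_thin_filler:
  assumes "tcomplex S T" "k \<le> Suc n" "face_family S n (horn_idx n k) y"
  shows "\<exists>!x. x \<in> T (Suc n) \<and> is_filler S n (horn_idx n k) y x"
  using assms unfolding tcomplex_def by simp

lemma tcomplex_thin_composite:
  assumes "tcomplex S T" "k \<le> Suc n" "face_family S n (horn_idx n k) y"
    "x \<in> T (Suc n)" "is_filler S n (horn_idx n k) y x"
    "\<forall>i\<in>horn_idx n k. \<not> degenerate S n (y i) \<longrightarrow> y i \<in> T n"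
  shows "fc S n k x \<in> T n"
  using assms unfolding tcomplex_def by simp

lemma tcomplex_degen_thin:
  assumes tc: "tcomplex S T" and "z \<in> sx S m" "j \<le> m"
  shows "dg S m j z \<in> T (Suc m)"
proof -
  have "degenerate S (Suc m) (dg S m j z)"
    unfolding degenerate_def using assms by blast
  then show ?thesis
    using tcomplex_degenerate_thin[OF tc] sset_degen_in[OF tcomplex_sset[OF tc]] assms by blast
qed

lemma face_family_faces:
  assumes "is_sset S" "z \<in> sx S (Suc p)" "I \<subseteq> {0..Suc p}"
  shows "face_family S p I (\<lambda>j. fc S p j z)"
  unfolding face_family_def
proof (intro conjI ballI impI)
  fix i assume "i \<in> I"
  with assms show "fc S p i z \<in> sx S p"
    by (intro sset_face_in) auto
next
  fix i j assume "0 < p" "i \<in> I" "j \<in> I" "i < j"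
  moreover obtain q where "p = Suc q"
    using \<open>0 < p\<close> gr0_implies_Suc by blast
  moreover have "j \<le> Suc p"
    using \<open>j \<in> I\<close> assms(3) by auto
  ultimately show "fc S (p - 1) i (fc S p j z) = fc S (p - 1) (j - 1) (fc S p i z)"
    using assms sset_face_face by simp
qed

lemma face_family_mono: "face_family S n I y \<Longrightarrow> J \<subseteq> I \<Longrightarrow> face_family S n J y"
  unfolding face_family_def by blast

lemma horn_idx_subset: "horn_idx n k \<subseteq> {0..Suc n}"
  unfolding horn_idx_def by blast

lemma sset_face_of_face_avoiding:
  assumes ss: "is_sset S" and x: "x \<in> sx S (Suc (Suc q))"
    and k: "k \<le> Suc (Suc q)" and j: "j \<le> Suc q"
  obtains i i' where "i \<le> Suc (Suc q)" "i \<noteq> k" "i' \<le> Suc q"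
    "fc S q j (fc S (Suc q) k x) = fc S q i' (fc S (Suc q) i x)"
proof (cases "j < k")
  case True
  then show ?thesis
    using that[of j "k - 1"] sset_face_face[OF ss True k x] j k by simp
next
  case False
  then show ?thesis
    using that[of "Suc j" k] sset_face_face[OF ss _ _ x, of k "Suc j"] j by simp
qed

section \<open>Thin simplices and coskeletality\<close>

lemma tcomplex_thin_eq_if_horn_faces_eq:
  assumes tc: "tcomplex S T" and k: "k \<le> Suc p"
    and z: "z \<in> T (Suc p)" and z': "z' \<in> T (Suc p)"
    and faces: "\<forall>j\<in>horn_idx p k. fc S p j z = fc S p j z'"
  shows "z = z'"
proof -
  let ?y = "\<lambda>j. fc S p j z"
  have "z \<in> sx S (Suc p)"
    using z tcomplex_thin_subset[OF tc] by blast
  then have "face_family S p (horn_idx p k) ?y"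
    using face_family_faces[OF tcomplex_sset[OF tc] _ horn_idx_subset] by simp
  then have "\<exists>!x. x \<in> T (Suc p) \<and> is_filler S p (horn_idx p k) ?y x"
    by (rule tcomplex_thin_filler[OF tc k])
  moreover have "is_filler S p (horn_idx p k) ?y z" "is_filler S p (horn_idx p k) ?y z'"
    using z z' faces tcomplex_thin_subset[OF tc] unfolding is_filler_def by auto
  ultimately show ?thesis
    using z z' by (metis (no_types, lifting))
qed

lemma tcomplex_thin_horn_filler_face_0:
  assumes tc: "tcomplex S T" and ff: "face_family S (Suc p) {0..Suc (Suc p)} y"
    and x: "is_filler S (Suc p) (horn_idx (Suc p) 0) y x"
    and thin: "fc S (Suc p) 0 x \<in> T (Suc p)" "y 0 \<in> T (Suc p)"
  shows "fc S (Suc p) 0 x = y 0"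
proof (rule tcomplex_thin_eq_if_horn_faces_eq[OF tc _ thin])
  show "\<forall>j\<in>horn_idx p 0. fc S p j (fc S (Suc p) 0 x) = fc S p j (y 0)"
  proof
    fix j assume "j \<in> horn_idx p 0"
    then have j: "1 \<le> j" "j \<le> Suc p"
      unfolding horn_idx_def by auto
    have "x \<in> sx S (Suc (Suc p))"
      using x unfolding is_filler_def by simp
    then have "fc S p j (fc S (Suc p) 0 x) = fc S p 0 (fc S (Suc p) (Suc j) x)"
      using sset_face_face[OF tcomplex_sset[OF tc], of 0 "Suc j" p x] j by simp
    also have "\<dots> = fc S p 0 (y (Suc j))"
      using x j unfolding is_filler_def horn_idx_def by simp
    also have "\<dots> = fc S p j (y 0)"
      using ff j unfolding face_family_def by auto
    finally show "fc S p j (fc S (Suc p) 0 x) = fc S p j (y 0)" .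
  qed
qed simp

lemma tcomplex_coskeletal_if_high_simplices_thin:
  assumes tc: "tcomplex S T" and thin: "\<And>m. n < m \<Longrightarrow> sx S m \<subseteq> T m"
  shows "coskeletal S (Suc n)"
  unfolding coskeletal_def
proof (intro allI impI, elim conjE)
  fix m y
  assume "Suc n < Suc m" and ff: "face_family S m {0..Suc m} y"
  then have "n < m"
    by simp
  then obtain p where m: "m = Suc p"
    by (cases m) auto
  obtain x where xT: "x \<in> T (Suc m)" and x: "is_filler S m (horn_idx m 0) y x"
    using tcomplex_thin_filler[OF tc _ face_family_mono[OF ff horn_idx_subset]] by blast
  have xs: "x \<in> sx S (Suc m)"
    using x unfolding is_filler_def by simp
  have "y 0 \<in> sx S m"
    using ff unfolding face_family_def by simp
  moreover have "fc S m 0 x \<in> sx S m"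
    using sset_face_in[OF tcomplex_sset[OF tc] _ xs] by simp
  ultimately have "fc S m 0 x = y 0"
    using tcomplex_thin_horn_filler_face_0[OF tc ff[unfolded m] x[unfolded m]] thin[OF \<open>n < m\<close>]
    unfolding m by blast
  then have "fc S m i x = y i" if "i \<le> Suc m" for i
    using x that unfolding is_filler_def horn_idx_def by (cases "i = 0") auto
  then have filler: "is_filler S m {0..Suc m} y x"
    using xs unfolding is_filler_def by simp
  show "\<exists>!x. is_filler S m {0..Suc m} y x"
  proof (rule ex1I)
    show "is_filler S m {0..Suc m} y x"
      by (rule filler)
  next
    fix x' assume x': "is_filler S m {0..Suc m} y x'"
    show "x' = x"
    proof (rule tcomplex_thin_eq_if_horn_faces_eq[OF tc _ _ xT])
      show "x' \<in> T (Suc m)"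
        using x' thin[of "Suc m"] \<open>n < m\<close> unfolding is_filler_def by auto
      show "\<forall>j\<in>horn_idx m 0. fc S m j x' = fc S m j x"
        using x x' unfolding is_filler_def horn_idx_def by auto
    qed simp
  qed
qed

section \<open>Sub-T-complexes and the universal property of St\<close>

definition sub_sset :: "'c sset \<Rightarrow> (nat \<Rightarrow> 'c set) \<Rightarrow> bool" where
  "sub_sset S P \<longleftrightarrow>
     (\<forall>m. P m \<subseteq> sx S m) \<and>
     (\<forall>n i x. i \<le> Suc n \<and> x \<in> P (Suc n) \<longrightarrow> fc S n i x \<in> P n) \<and>
     (\<forall>n i x. i \<le> n \<and> x \<in> P n \<longrightarrow> dg S n i x \<in> P (Suc n))"

definition sub_tcomplex :: "'c sset \<Rightarrow> (nat \<Rightarrow> 'c set) \<Rightarrow> (nat \<Rightarrow> 'c set) \<Rightarrow> bool" where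
  "sub_tcomplex S T P \<longleftrightarrow>
     sub_sset S P \<and>
     (\<forall>n k y x. k \<le> Suc n \<and> face_family S n (horn_idx n k) y \<and>
        (\<forall>i\<in>horn_idx n k. y i \<in> P n) \<and> x \<in> T (Suc n) \<and> is_filler S n (horn_idx n k) y x \<longrightarrow>
        x \<in> P (Suc n))"

lemma is_sset_restrict:
  assumes ss: "is_sset S" and sub: "sub_sset S P"
  shows "is_sset (S\<lparr>sx := P\<rparr>)"
proof -
  have "\<And>m x. x \<in> P m \<Longrightarrow> x \<in> sx S m"
    using sub unfolding sub_sset_def by blast
  then show ?thesis
    using sub unfolding is_sset_def sub_sset_def
    by (simp add: ss sset_face_face sset_degen_degen sset_face_degen_less sset_face_degen_eq
        sset_face_degen_greater)
qed

lemma degenerate_restrict: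
  "degenerate (S\<lparr>sx := P\<rparr>) m x \<Longrightarrow> sub_sset S P \<Longrightarrow> degenerate S m x"
  unfolding degenerate_def sub_sset_def by (simp, blast)

lemma face_family_restrict_iff:
  "face_family (S\<lparr>sx := P\<rparr>) n I y \<longleftrightarrow> face_family S n I y \<and> (\<forall>i\<in>I. y i \<in> P n)"
  if "sub_sset S P"
  using that unfolding face_family_def sub_sset_def by (auto simp: subset_iff)

lemma is_filler_restrict_iff:
  "is_filler (S\<lparr>sx := P\<rparr>) n I y x \<longleftrightarrow> is_filler S n I y x \<and> x \<in> P (Suc n)"
  if "sub_sset S P"
  using that unfolding is_filler_def sub_sset_def by (auto simp: subset_iff)

lemma restrict_thin_filler_unique:
  assumes tc: "tcomplex S T" and sub: "sub_tcomplex S T P"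
    and k: "k \<le> Suc n" and ffP: "face_family (S\<lparr>sx := P\<rparr>) n (horn_idx n k) y"
  shows "\<exists>!x. x \<in> T (Suc n) \<inter> P (Suc n) \<and> is_filler (S\<lparr>sx := P\<rparr>) n (horn_idx n k) y x"
proof -
  have sub_sset: "sub_sset S P"
    using sub unfolding sub_tcomplex_def by simp
  have ff: "face_family S n (horn_idx n k) y" and yP: "\<forall>i\<in>horn_idx n k. y i \<in> P n"
    using ffP unfolding face_family_restrict_iff[OF sub_sset] by simp_all
  obtain x where x: "x \<in> T (Suc n)" "is_filler S n (horn_idx n k) y x"
    and unique: "\<And>x'. x' \<in> T (Suc n) \<Longrightarrow> is_filler S n (horn_idx n k) y x' \<Longrightarrow> x' = x"
    using tcomplex_thin_filler[OF tc k ff] by blast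
  have "x \<in> P (Suc n)"
    using sub k ff yP x unfolding sub_tcomplex_def by blast
  then show ?thesis
    using x unique unfolding is_filler_restrict_iff[OF sub_sset] by blast
qed

lemma tcomplex_restrict:
  assumes tc: "tcomplex S T" and sub: "sub_tcomplex S T P"
  shows "tcomplex (S\<lparr>sx := P\<rparr>) (\<lambda>m. T m \<inter> P m)"
proof -
  have sub_sset: "sub_sset S P"
    using sub unfolding sub_tcomplex_def by simp
  note ff_iff = face_family_restrict_iff[OF sub_sset]
  note filler_iff = is_filler_restrict_iff[OF sub_sset]
  show ?thesis
    unfolding tcomplex_def
  proof (intro conjI allI impI; (elim conjE)?)
    show "is_sset (S\<lparr>sx := P\<rparr>)"
      using is_sset_restrict[OF tcomplex_sset[OF tc] sub_sset] .
  next
    fix m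
    show "T m \<inter> P m \<subseteq> sx (S\<lparr>sx := P\<rparr>) m"
      by simp
  next
    fix m x
    assume "x \<in> sx (S\<lparr>sx := P\<rparr>) m" "degenerate (S\<lparr>sx := P\<rparr>) m x"
    moreover from this have "x \<in> sx S m"
      using sub_sset unfolding sub_sset_def by auto
    ultimately show "x \<in> T m \<inter> P m"
      using tcomplex_degenerate_thin[OF tc] degenerate_restrict[OF _ sub_sset] by simp
  next
    fix n k y
    assume "k \<le> Suc n" "face_family (S\<lparr>sx := P\<rparr>) n (horn_idx n k) y"
    then show "\<exists>!x. x \<in> T (Suc n) \<inter> P (Suc n) \<and> is_filler (S\<lparr>sx := P\<rparr>) n (horn_idx n k) y x"
      by (rule restrict_thin_filler_unique[OF tc sub])
  next
    fix n k y x
    assume k: "k \<le> Suc n" and ff: "face_family (S\<lparr>sx := P\<rparr>) n (horn_idx n k) y"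
      and xT: "x \<in> T (Suc n) \<inter> P (Suc n)" and x: "is_filler (S\<lparr>sx := P\<rparr>) n (horn_idx n k) y x"
      and thin: "\<forall>i\<in>horn_idx n k. \<not> degenerate (S\<lparr>sx := P\<rparr>) n (y i) \<longrightarrow> y i \<in> T n \<inter> P n"
    have "\<forall>i\<in>horn_idx n k. \<not> degenerate S n (y i) \<longrightarrow> y i \<in> T n"
      using thin degenerate_restrict[OF _ sub_sset] by blast
    then have "fc S n k x \<in> T n"
      using tcomplex_thin_composite[OF tc k] ff xT x unfolding ff_iff filler_iff by blast
    moreover have "fc S n k x \<in> P n"
      using xT k sub_sset unfolding sub_sset_def by blast
    ultimately show "fc (S\<lparr>sx := P\<rparr>) n k x \<in> T n \<inter> P n"
      by simp
  qed
qed

lemma tmap_restrict_codomain: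
  assumes "is_tmap S T (S\<lparr>sx := P\<rparr>) (\<lambda>m. T m \<inter> P m) g" "sub_sset S P"
  shows "is_tmap S T S T g"
proof -
  have "\<forall>m. \<forall>x\<in>sx S m. g m x \<in> P m" "\<forall>m. \<forall>x\<in>T m. g m x \<in> T m \<inter> P m"
    and faces: "\<forall>n i x. i \<le> Suc n \<and> x \<in> sx S (Suc n) \<longrightarrow> g n (fc S n i x) = fc S n i (g (Suc n) x)"
    and degens: "\<forall>n i x. i \<le> n \<and> x \<in> sx S n \<longrightarrow> g (Suc n) (dg S n i x) = dg S n i (g n x)"
    using assms(1) unfolding is_tmap_def is_smap_def by simp_all
  moreover have "\<forall>m. P m \<subseteq> sx S m"
    using assms(2) unfolding sub_sset_def by simp
  ultimately show ?thesis
    unfolding is_tmap_def is_smap_def using faces degens by blast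
qed

lemma St_endomorphism_eq_id:
  assumes St: "is_St X S T \<eta>" and g: "is_tmap S T S T g"
    and g_unit: "\<forall>m. \<forall>x\<in>sx X m. g m (\<eta> m x) = \<eta> m x"
    and z: "z \<in> sx S m"
  shows "g m z = z"
proof -
  have "tcomplex S T" "is_smap X S \<eta>"
    using St unfolding is_St_def by simp_all
  then have "\<exists>g0. \<forall>g'. is_tmap S T S T g' \<and> (\<forall>m. \<forall>x\<in>sx X m. g' m (\<eta> m x) = \<eta> m x) \<longrightarrow>
      (\<forall>m. \<forall>z\<in>sx S m. g' m z = g0 m z)"
    using St unfolding is_St_def by blast
  then obtain g0 where unique: "\<And>g'. is_tmap S T S T g' \<Longrightarrow>
      \<forall>m. \<forall>x\<in>sx X m. g' m (\<eta> m x) = \<eta> m x \<Longrightarrow> \<forall>m. \<forall>z\<in>sx S m. g' m z = g0 m z"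
    by blast
  have "is_tmap S T S T (\<lambda>m z. z)"
    unfolding is_tmap_def is_smap_def by simp
  then have "z = g0 m z"
    using unique[of "\<lambda>m z. z"] z by simp
  moreover have "g m z = g0 m z"
    using unique[OF g g_unit] z by blast
  ultimately show ?thesis by simp
qed

lemma St_sub_tcomplex_eq:
  assumes St: "is_St X S T \<eta>" and sub: "sub_tcomplex S T P"
    and unit_in: "\<forall>m. \<forall>x\<in>sx X m. \<eta> m x \<in> P m"
  shows "P m = sx S m"
proof
  have sub_sset: "sub_sset S P"
    using sub unfolding sub_tcomplex_def by simp
  then show "P m \<subseteq> sx S m"
    unfolding sub_sset_def by simp
  have tc: "tcomplex S T" and \<eta>: "is_smap X S \<eta>"
    using St unfolding is_St_def by simp_all
  have "is_smap X (S\<lparr>sx := P\<rparr>) \<eta>"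
    using \<eta> unit_in unfolding is_smap_def by simp
  then obtain g where g: "is_tmap S T (S\<lparr>sx := P\<rparr>) (\<lambda>m. T m \<inter> P m) g"
    and g_unit: "\<forall>m. \<forall>x\<in>sx X m. g m (\<eta> m x) = \<eta> m x"
    using St tcomplex_restrict[OF tc sub] unfolding is_St_def by blast
  show "sx S m \<subseteq> P m"
  proof
    fix z assume z: "z \<in> sx S m"
    then have "g m z \<in> P m"
      using g unfolding is_tmap_def is_smap_def by simp
    then show "z \<in> P m"
      using St_endomorphism_eq_id[OF St tmap_restrict_codomain[OF g sub_sset] g_unit z] by simp
  qed
qed

section \<open>Hereditarily thin simplices\<close>

primrec hereditarily_thin :: "'c sset \<Rightarrow> (nat \<Rightarrow> 'c set) \<Rightarrow> nat \<Rightarrow> nat \<Rightarrow> 'c set" where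
  "hereditarily_thin S T n 0 = sx S 0"
| "hereditarily_thin S T n (Suc m) = {x \<in> sx S (Suc m). (n < Suc m \<longrightarrow> x \<in> T (Suc m)) \<and>
      (\<forall>i \<le> Suc m. fc S m i x \<in> hereditarily_thin S T n m)}"

lemma hereditarily_thin_subset: "hereditarily_thin S T n m \<subseteq> sx S m"
  by (cases m) auto

lemma hereditarily_thin_thin: "n < m \<Longrightarrow> hereditarily_thin S T n m \<subseteq> T m"
  by (cases m) auto

lemma hereditarily_thin_face:
  "x \<in> hereditarily_thin S T n (Suc m) \<Longrightarrow> i \<le> Suc m \<Longrightarrow> fc S m i x \<in> hereditarily_thin S T n m"
  by simp

lemma hereditarily_thin_eq_simplices:
  "is_sset S \<Longrightarrow> m \<le> n \<Longrightarrow> hereditarily_thin S T n m = sx S m"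
  by (induction m) (use sset_face_in[of S] in auto)

lemma hereditarily_thin_degen:
  assumes tc: "tcomplex S T" and z: "z \<in> hereditarily_thin S T n m" and j: "j \<le> m"
  shows "dg S m j z \<in> hereditarily_thin S T n (Suc m)"
  using z j
proof (induction m arbitrary: z j)
  case 0
  have ss: "is_sset S"
    using tcomplex_sset[OF tc] .
  have "z \<in> sx S 0"
    using "0.prems"(1) by simp
  then show ?case
    using "0.prems" sset_degen_in[OF ss] sset_face_degen_eq[OF ss] tcomplex_degen_thin[OF tc]
    by (auto simp: le_Suc_eq)
next
  case (Suc m)
  have ss: "is_sset S"
    using tcomplex_sset[OF tc] .
  have zs: "z \<in> sx S (Suc m)"
    using Suc.prems(1) by simp
  have "fc S (Suc m) i (dg S (Suc m) j z) \<in> hereditarily_thin S T n (Suc m)" if i: "i \<le> Suc (Suc m)" for i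
  proof -
    consider "i < j" | "i = j \<or> i = Suc j" | "Suc j < i" by linarith
    then show ?thesis
    proof cases
      case 1
      then show ?thesis
        unfolding sset_face_degen_less[OF ss 1 Suc.prems(2) zs]
        by (intro Suc.IH) (use Suc.prems in simp_all)
    next
      case 2
      then show ?thesis
        using sset_face_degen_eq[OF ss Suc.prems(2) zs] Suc.prems(1) by auto
    next
      case 3
      then show ?thesis
        unfolding sset_face_degen_greater[OF ss 3 i zs]
        by (intro Suc.IH) (use Suc.prems i in simp_all)
    qed
  qed
  then show ?case
    using sset_degen_in[OF ss Suc.prems(2) zs] tcomplex_degen_thin[OF tc zs Suc.prems(2)] by simp
qed

lemma hereditarily_thin_horn_filler:
  assumes tc: "tcomplex S T" and k: "k \<le> Suc p"
    and ff: "face_family S p (horn_idx p k) y"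
    and y: "\<forall>i\<in>horn_idx p k. y i \<in> hereditarily_thin S T n p"
    and xT: "x \<in> T (Suc p)" and x: "is_filler S p (horn_idx p k) y x"
  shows "x \<in> hereditarily_thin S T n (Suc p)"
proof -
  have ss: "is_sset S"
    using tcomplex_sset[OF tc] .
  have xs: "x \<in> sx S (Suc p)"
    using x unfolding is_filler_def by simp
  have x_faces: "fc S p i x = y i" if "i \<le> Suc p" "i \<noteq> k" for i
    using x that unfolding is_filler_def horn_idx_def by simp
  have "fc S p k x \<in> hereditarily_thin S T n p"
  proof (cases "p \<le> n")
    case True
    then show ?thesis
      using hereditarily_thin_eq_simplices[OF ss] sset_face_in[OF ss k xs] by blast
  next
    case False
    then have "n < p"
      by simp
    then obtain q where p: "p = Suc q"
      by (cases p) auto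
    have "\<forall>i\<in>horn_idx p k. y i \<in> T p"
      using y hereditarily_thin_thin[OF \<open>n < p\<close>, of S T] by (auto simp: subset_iff)
    then have thin: "fc S p k x \<in> T p"
      using tcomplex_thin_composite[OF tc k ff xT x] by blast
    have "fc S q j (fc S p k x) \<in> hereditarily_thin S T n q" if j: "j \<le> Suc q" for j
    proof -
      obtain i i' where "i \<le> Suc p" "i \<noteq> k" "i' \<le> Suc q"
        and "fc S q j (fc S p k x) = fc S q i' (fc S p i x)"
        using sset_face_of_face_avoiding[OF ss _ _ j, of x k] xs k p by auto
      then show ?thesis
        using x_faces y hereditarily_thin_face p unfolding horn_idx_def by auto
    qed
    then show ?thesis
      using sset_face_in[OF ss k xs] thin p by simp
  qed
  then have "fc S p i x \<in> hereditarily_thin S T n p" if "i \<le> Suc p" for i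
    using that x_faces y unfolding horn_idx_def by (cases "i = k") auto
  then show ?thesis
    using xs xT by simp
qed

lemma sub_tcomplex_hereditarily_thin:
  assumes tc: "tcomplex S T"
  shows "sub_tcomplex S T (hereditarily_thin S T n)"
  unfolding sub_tcomplex_def sub_sset_def
proof (intro conjI allI impI; (elim conjE)?)
  fix m
  show "hereditarily_thin S T n m \<subseteq> sx S m"
    by (rule hereditarily_thin_subset)
next
  fix p i x
  assume "i \<le> Suc p" "x \<in> hereditarily_thin S T n (Suc p)"
  then show "fc S p i x \<in> hereditarily_thin S T n p"
    by (intro hereditarily_thin_face)
next
  fix p i x
  assume "i \<le> p" "x \<in> hereditarily_thin S T n p"
  then show "dg S p i x \<in> hereditarily_thin S T n (Suc p)"
    by (intro hereditarily_thin_degen[OF tc])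
next
  fix p k y x
  assume "k \<le> Suc p" "face_family S p (horn_idx p k) y" "\<forall>i\<in>horn_idx p k. y i \<in> hereditarily_thin S T n p"
    "x \<in> T (Suc p)" "is_filler S p (horn_idx p k) y x"
  then show "x \<in> hereditarily_thin S T n (Suc p)"
    by (intro hereditarily_thin_horn_filler[OF tc])
qed

lemma smap_from_skeletal_hereditarily_thin:
  assumes X: "is_sset X" "skeletal X n" and tc: "tcomplex S T" and f: "is_smap X S f"
    and x: "x \<in> sx X m"
  shows "f m x \<in> hereditarily_thin S T n m"
  using x
proof (induction m arbitrary: x)
  case 0
  then show ?case
    using smap_in[OF f] by simp
next
  case (Suc m)
  have fx: "f (Suc m) x \<in> sx S (Suc m)"
    using smap_in[OF f Suc.prems] .
  have "f (Suc m) x \<in> T (Suc m)" if "n < Suc m"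
  proof -
    have "degenerate X (Suc m) x"
      using X(2) that Suc.prems unfolding skeletal_def by blast
    then show ?thesis
      using tcomplex_degenerate_thin[OF tc fx] smap_degenerate[OF f] by blast
  qed
  moreover have "fc S m i (f (Suc m) x) \<in> hereditarily_thin S T n m" if "i \<le> Suc m" for i
    using Suc.IH[OF sset_face_in[OF X(1) that Suc.prems]] smap_face[OF f that Suc.prems] by simp
  ultimately show ?case
    using fx by simp
qed

theorem mainTheorem11:
  fixes X :: "'a sset" and S :: "'c sset" and T :: "nat \<Rightarrow> 'c set"
    and \<eta> :: "nat \<Rightarrow> 'a \<Rightarrow> 'c" and n :: nat
  assumes "is_sset X"
    and "skeletal X n"
    and "is_St X S T \<eta>"
    and "infinite (UNIV :: 'c set)"
    and "\<exists>h :: 'a \<Rightarrow> 'c. inj h"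
  shows "coskeletal S (Suc n)"
proof -
  have tc: "tcomplex S T" and \<eta>: "is_smap X S \<eta>"
    using assms(3) unfolding is_St_def by simp_all
  have "hereditarily_thin S T n m = sx S m" for m
    using St_sub_tcomplex_eq[OF assms(3) sub_tcomplex_hereditarily_thin[OF tc]]
      smap_from_skeletal_hereditarily_thin[OF assms(1,2) tc \<eta>] by blast
  then have "sx S m \<subseteq> T m" if "n < m" for m
    using hereditarily_thin_thin[OF that] by metis
  then show ?thesis
    using tcomplex_coskeletal_if_high_simplices_thin[OF tc] by blast
qed

end
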